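(* Let $\mathcal{C}\subseteq 2^{[n]}$ and $\mathcal{D}\subseteq 2^{[m]}$ be codes and let $f:\mathcal{C}\to\mathcal{D}$ be a morphism. If $\mathcal{C}$ is convex, then the image code $f(\mathcal{C})\subseteq 2^{[m]}$ is convex and $\mathrm{mindim}(f(\mathcal{C}))\le \mathrm{mindim}(\mathcal{C})$. In particular, if $\mathcal{C}$ and $\mathcal{D}$ are isomorphic, then $\mathcal{C}$ is convex if and only if $\mathcal{D}$ is convex, and when both are convex they have the same minimal embedding dimension.
   Context: A code is a subset $\mathcal{C}\subseteq 2^{[n]}$ (a family of subsets of $[n]=\{1,\dots,n\}$); its elements are called codewords. For $\sigma\subseteq[n]$, the trunk of $\sigma$ in $\mathcal{C}$ is $\mathrm{Tk}_{\mathcal{C}}(\sigma)=\{c\in\mathcal{C}\mid \sigma\subseteq c\}$. A subset of $\mathcal{C}$ is a trunk in $\mathcal{C}$ if it is empty or equals $\mathrm{Tk}_{\mathcal{C}}(\sigma)$ for some $\sigma\subseteq[n]$. A function $f:\mathcal{C}\to\mathcal{D}$ between codes is a morphism if for every trunk $T$ in $\mathcal{D}$, the preimage $f^{-1}(T)$ is a trunk in $\mathcal{C}$; it is an isomorphism if it has an inverse function that is also a morphism. Given sets $U_1,\dots,U_n\subseteq X$, the code of $\mathcal{U}=\{U_1,\dots,U_n\}$ in $X$ is $\mathrm{code}(\mathcal{U},X)=\{\sigma\subseteq[n]\mid \bigcap_{i\in\sigma}U_i\setminus\bigcup_{j\notin\sigma}U_j\neq\emptyset\}$, where the empty intersection is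 $X$. A code $\mathcal{C}\subseteq 2^{[n]}$ is convex if $\mathcal{C}=\mathrm{code}(\mathcal{U},X)$ for some open convex $X\subseteq\mathbb{R}^d$ and convex open sets $U_1,\dots,U_n\subseteq X$; $\mathrm{mindim}(\mathcal{C})$ is the smallest such $d$. *)

theory Defs
  imports "HOL-Analysis.Analysis"
begin

text \<open>Codes on [n] = {1..n} are families of subsets of {1..n}, represented as
  nat set set with the side condition C \<subseteq> Pow {1..n}.\<close>

definition trunk_of :: "nat set set \<Rightarrow> nat set \<Rightarrow> nat set set" where
  "trunk_of C \<sigma> = {c \<in> C. \<sigma> \<subseteq> c}"

definition is_trunk :: "nat \<Rightarrow> nat set set \<Rightarrow> nat set set \<Rightarrow> bool" where
  "is_trunk n C T \<longleftrightarrow> T = {} \<or> (\<exists>\<sigma>. \<sigma> \<subseteq> {1..n} \<and> T = trunk_of C \<sigma>)"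

definition code_morphism ::
  "nat \<Rightarrow> nat set set \<Rightarrow> nat \<Rightarrow> nat set set \<Rightarrow> (nat set \<Rightarrow> nat set) \<Rightarrow> bool" where
  "code_morphism n C m D f \<longleftrightarrow>
     (\<forall>c\<in>C. f c \<in> D) \<and> (\<forall>T. is_trunk m D T \<longrightarrow> is_trunk n C {c \<in> C. f c \<in> T})"

definition code_isomorphic :: "nat \<Rightarrow> nat set set \<Rightarrow> nat \<Rightarrow> nat set set \<Rightarrow> bool" where
  "code_isomorphic n C m D \<longleftrightarrow>
     (\<exists>f g. code_morphism n C m D f \<and> code_morphism m D n C g \<and>
            (\<forall>c\<in>C. g (f c) = c) \<and> (\<forall>d\<in>D. f (g d) = d))"

definition code_of :: "nat \<Rightarrow> (nat \<Rightarrow> 'a set) \<Rightarrow> 'a set \<Rightarrow> nat set set" where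
  "code_of n U X = {\<sigma>. \<sigma> \<subseteq> {1..n} \<and>
      (X \<inter> (\<Inter>i\<in>\<sigma>. U i)) - (\<Union>j\<in>{1..n} - \<sigma>. U j) \<noteq> {}}"

text \<open>Euclidean space R^d, realised as the real sequences vanishing from index d on,
  with the (product = Euclidean) topology and coordinatewise convex combinations.\<close>
definition Rspace :: "nat \<Rightarrow> (nat \<Rightarrow> real) set" where
  "Rspace d = {x. \<forall>i\<ge>d. x i = 0}"

definition convex_fun_set :: "(nat \<Rightarrow> real) set \<Rightarrow> bool" where
  "convex_fun_set S \<longleftrightarrow>
     (\<forall>x\<in>S. \<forall>y\<in>S. \<forall>t::real. 0 \<le> t \<and> t \<le> 1 \<longrightarrow> (\<lambda>i. (1 - t) * x i + t * y i) \<in> S)"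

definition open_convex_in :: "nat \<Rightarrow> (nat \<Rightarrow> real) set \<Rightarrow> bool" where
  "open_convex_in d S \<longleftrightarrow> S \<subseteq> Rspace d \<and> openin (top_of_set (Rspace d)) S \<and> convex_fun_set S"

definition convex_code_in_dim :: "nat \<Rightarrow> nat set set \<Rightarrow> nat \<Rightarrow> bool" where
  "convex_code_in_dim n C d \<longleftrightarrow>
     (\<exists>X U. open_convex_in d X \<and> (\<forall>i\<in>{1..n}. open_convex_in d (U i) \<and> U i \<subseteq> X)
            \<and> C = code_of n U X)"

definition convex_code :: "nat \<Rightarrow> nat set set \<Rightarrow> bool" where
  "convex_code n C \<longleftrightarrow> (\<exists>d. convex_code_in_dim n C d)"

definition mindim :: "nat \<Rightarrow> nat set set \<Rightarrow> nat" where
  "mindim n C = (LEAST d. convex_code_in_dim n C d)"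

end

theory Submission
  imports Defs
begin

text \<open>Realise a convex code by open convex sets U_1, ..., U_n in X and let each point p of X
  carry its codeword {i. p \<in> U_i}. For a morphism f, the codewords c with j \<in> f c form a
  trunk of C, i.e. those containing some \<sigma>_j; so the points whose codeword lies in it are
  exactly the points of X \<inter> \<Inter>_{i\<in>\<sigma>_j} U_i, again an open convex set. These sets, one for
  each j, realise f(C) in the same dimension. An isomorphism gives this in both directions.\<close>

lemma open_convex_in_empty: "open_convex_in d {}"
  unfolding open_convex_in_def convex_fun_set_def by auto

lemma open_convex_in_Int:
  "open_convex_in d A \<Longrightarrow> open_convex_in d B \<Longrightarrow> open_convex_in d (A \<inter> B)"
  unfolding open_convex_in_def convex_fun_set_def by (auto intro: openin_Int)

lemma open_convex_in_Int_INT: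
  assumes "finite S" "open_convex_in d X" "\<forall>i\<in>S. open_convex_in d (U i)"
  shows "open_convex_in d (X \<inter> (\<Inter>i\<in>S. U i))"
  using assms
proof (induction S rule: finite_induct)
  case empty
  then show ?case by simp
next
  case (insert x F)
  have "X \<inter> (\<Inter>i\<in>insert x F. U i) = U x \<inter> (X \<inter> (\<Inter>i\<in>F. U i))" by auto
  then show ?case using insert open_convex_in_Int by auto
qed

definition codeword :: "nat \<Rightarrow> (nat \<Rightarrow> 'a set) \<Rightarrow> 'a \<Rightarrow> nat set" where
  "codeword n U p = {i \<in> {1..n}. p \<in> U i}"

lemma code_of_eq_image_codeword: "code_of n U X = codeword n U ` X"
proof
  show "code_of n U X \<subseteq> codeword n U ` X"
  proof
    fix c assume "c \<in> code_of n U X"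
    then obtain p where "p \<in> X" "\<forall>i\<in>c. p \<in> U i" "\<forall>j\<in>{1..n} - c. p \<notin> U j" "c \<subseteq> {1..n}"
      unfolding code_of_def by blast
    then have "codeword n U p = c" unfolding codeword_def by auto
    with \<open>p \<in> X\<close> show "c \<in> codeword n U ` X" by blast
  qed
  show "codeword n U ` X \<subseteq> code_of n U X"
    unfolding code_of_def codeword_def by auto
qed

lemma trunk_realization:
  assumes X: "open_convex_in d X"
    and U: "\<forall>i\<in>{1..n}. open_convex_in d (U i)"
    and T: "is_trunk n (code_of n U X) T"
  obtains V where "open_convex_in d V" "V \<subseteq> X"
    "\<forall>p\<in>X. p \<in> V \<longleftrightarrow> codeword n U p \<in> T"
proof (cases "T = {}")
  case True
  then show ?thesis using that open_convex_in_empty by auto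
next
  case False
  then obtain \<sigma> where \<sigma>: "\<sigma> \<subseteq> {1..n}" "T = trunk_of (code_of n U X) \<sigma>"
    using T unfolding is_trunk_def by blast
  have "finite \<sigma>" using \<sigma>(1) finite_subset by blast
  then have "open_convex_in d (X \<inter> (\<Inter>i\<in>\<sigma>. U i))"
    using open_convex_in_Int_INT X U \<sigma>(1) by blast
  moreover have "\<forall>p\<in>X. p \<in> X \<inter> (\<Inter>i\<in>\<sigma>. U i) \<longleftrightarrow> codeword n U p \<in> T"
    using \<sigma> unfolding trunk_of_def code_of_eq_image_codeword codeword_def by auto
  ultimately show ?thesis using that by blast
qed

lemma code_morphism_preimage_coordinate_is_trunk:
  assumes "code_morphism n C m D f" "j \<in> {1..m}"
  shows "is_trunk n C {c \<in> C. j \<in> f c}"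
proof -
  have "is_trunk m D (trunk_of D {j})" unfolding is_trunk_def using assms(2) by blast
  then have "is_trunk n C {c \<in> C. f c \<in> trunk_of D {j}}"
    using assms(1) unfolding code_morphism_def by blast
  moreover have "{c \<in> C. f c \<in> trunk_of D {j}} = {c \<in> C. j \<in> f c}"
    using assms(1) unfolding code_morphism_def trunk_of_def by blast
  ultimately show ?thesis by simp
qed

lemma convex_code_in_dim_image:
  assumes f: "code_morphism n C m D f" and D: "D \<subseteq> Pow {1..m}"
    and C: "convex_code_in_dim n C d"
  shows "convex_code_in_dim m (f ` C) d"
proof -
  obtain X U where X: "open_convex_in d X"
    and U: "\<forall>i\<in>{1..n}. open_convex_in d (U i) \<and> U i \<subseteq> X" and C_eq: "C = code_of n U X"
    using C unfolding convex_code_in_dim_def by blast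
  have "\<forall>j\<in>{1..m}. \<exists>V. open_convex_in d V \<and> V \<subseteq> X \<and>
            (\<forall>p\<in>X. p \<in> V \<longleftrightarrow> codeword n U p \<in> {c \<in> C. j \<in> f c})"
  proof
    fix j assume "j \<in> {1..m}"
    then have "is_trunk n (code_of n U X) {c \<in> C. j \<in> f c}"
      using code_morphism_preimage_coordinate_is_trunk[OF f] C_eq by simp
    then obtain V where "open_convex_in d V" "V \<subseteq> X"
      "\<forall>p\<in>X. p \<in> V \<longleftrightarrow> codeword n U p \<in> {c \<in> C. j \<in> f c}"
      using trunk_realization[OF X] U by blast
    then show "\<exists>V. open_convex_in d V \<and> V \<subseteq> X \<and>
            (\<forall>p\<in>X. p \<in> V \<longleftrightarrow> codeword n U p \<in> {c \<in> C. j \<in> f c})" by blast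
  qed
  then obtain V where V: "\<forall>j\<in>{1..m}. open_convex_in d (V j) \<and> V j \<subseteq> X \<and>
            (\<forall>p\<in>X. p \<in> V j \<longleftrightarrow> codeword n U p \<in> {c \<in> C. j \<in> f c})"
    by (rule bchoice[THEN exE])
  have "codeword m V p = f (codeword n U p)" if "p \<in> X" for p
  proof -
    have "codeword n U p \<in> C" using that unfolding C_eq code_of_eq_image_codeword by blast
    then have "f (codeword n U p) \<subseteq> {1..m}" using f D unfolding code_morphism_def by blast
    then show ?thesis using V that \<open>codeword n U p \<in> C\<close> unfolding codeword_def by auto
  qed
  then have "code_of m V X = f ` C"
    unfolding C_eq code_of_eq_image_codeword image_image by simp
  then show ?thesis unfolding convex_code_in_dim_def using X V by blast
qed

lemma convex_code_in_dim_mindim: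
  "convex_code n C \<Longrightarrow> convex_code_in_dim n C (mindim n C)"
  unfolding convex_code_def mindim_def by (meson LeastI)

lemma mindim_le: "convex_code_in_dim n C d \<Longrightarrow> mindim n C \<le> d"
  unfolding mindim_def by (rule Least_le)

lemma convex_code_image:
  assumes "code_morphism n C m D f" "D \<subseteq> Pow {1..m}" "convex_code n C"
  shows "convex_code m (f ` C) \<and> mindim m (f ` C) \<le> mindim n C"
  using convex_code_in_dim_image[OF assms(1,2) convex_code_in_dim_mindim[OF assms(3)]]
  unfolding convex_code_def by (blast intro: mindim_le)

lemma image_eq_if_right_inverse:
  assumes "\<forall>c\<in>C. f c \<in> D" "\<forall>d\<in>D. g d \<in> C" "\<forall>d\<in>D. f (g d) = d"
  shows "f ` C = D"
proof
  show "f ` C \<subseteq> D" using assms(1) by blast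
  show "D \<subseteq> f ` C"
  proof
    fix d assume "d \<in> D"
    then have "d = f (g d)" "g d \<in> C" using assms(2,3) by auto
    then show "d \<in> f ` C" by (rule image_eqI)
  qed
qed

lemma code_isomorphic_imp_onto_morphisms:
  assumes "code_isomorphic n C m D"
  obtains f g where "code_morphism n C m D f" "f ` C = D"
    "code_morphism m D n C g" "g ` D = C"
proof -
  obtain f g where f: "code_morphism n C m D f" and g: "code_morphism m D n C g"
    and gf: "\<forall>c\<in>C. g (f c) = c" and fg: "\<forall>d\<in>D. f (g d) = d"
    using assms unfolding code_isomorphic_def by blast
  have maps: "\<forall>c\<in>C. f c \<in> D" "\<forall>d\<in>D. g d \<in> C"
    using f g unfolding code_morphism_def by blast+
  show ?thesis
    using that[OF f image_eq_if_right_inverse[OF maps fg] g image_eq_if_right_inverse[OF maps(2,1) gf]] .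
qed

theorem theorem1p1:
  fixes n m :: nat and C D :: "nat set set"
  assumes "C \<subseteq> Pow {1..n}" and "D \<subseteq> Pow {1..m}"
  shows "(\<forall>f. code_morphism n C m D f \<and> convex_code n C \<longrightarrow>
            convex_code m (f ` C) \<and> mindim m (f ` C) \<le> mindim n C)
       \<and> (code_isomorphic n C m D \<longrightarrow>
            (convex_code n C \<longleftrightarrow> convex_code m D) \<and>
            (convex_code n C \<and> convex_code m D \<longrightarrow> mindim n C = mindim m D))"
proof (intro conjI impI allI)
  fix f assume "code_morphism n C m D f \<and> convex_code n C"
  then show "convex_code m (f ` C)" "mindim m (f ` C) \<le> mindim n C"
    using convex_code_image assms(2) by blast+
next
  assume "code_isomorphic n C m D"
  then obtain f g where f: "code_morphism n C m D f" "f ` C = D"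
    and g: "code_morphism m D n C g" "g ` D = C"
    by (rule code_isomorphic_imp_onto_morphisms)
  note images = convex_code_image[OF f(1) assms(2)] convex_code_image[OF g(1) assms(1)]
  then show "convex_code n C \<longleftrightarrow> convex_code m D"
    using f(2) g(2) by auto
  show "mindim n C = mindim m D" if "convex_code n C \<and> convex_code m D"
    using that images f(2) g(2) by (auto intro: antisym)
qed

end
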